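(* Let $\mathscr{S}\subseteq\mathbb{R}$. For each $s\in\mathscr{S}$ let $\{\mathcal{V}(s,t),\ t\in\mathbb{R}^+\}$ be a real-valued stochastic process. Let $\{X_t,\ t\in\mathbb{R}^+\}$ be a real-valued stochastic process with $X_0=0$. For each $s\in\mathscr{S}$ let $\{\mathcal{Z}(s,t),\ t\in\mathbb{R}^+\}$ be a right-continuous supermartingale adapted to the natural filtration generated by $\{\mathcal{V}(s,t),\ t\in\mathbb{R}^+\}$ and $\{X_t,\ t\in\mathbb{R}^+\}$, such that for all $s\in\mathscr{S}$, \[ \mathbb{E}[\mathcal{Z}(s,0)]\le 1\quad\text{and}\quad \exp(sX_t-\mathcal{V}(s,t))\le\mathcal{Z}(s,t)\ \text{ almost surely for all } t\in\mathbb{R}^+. \] Let $\gamma\in\mathbb{R}$ and let $g$ be a real-valued function on $\mathscr{S}$. Then \[ \Pr\Big\{\sup_{t>0}\big[s(X_t-\gamma)-\mathcal{V}(s,t)+g(s)\big]\ge 0\Big\}\le\exp(g(s)-\gamma s)\quad\text{for all } s\in\mathscr{S}. \] In particular: (I) If the infimum of $g(s)-\gamma s$ over $s\in\mathscr{S}$ is attained at $\zeta\in\mathscr{S}$, then $\Pr\{\sup_{t>0}[\zeta(X_t-\gamma)-\mathcal{V}(\zeta,t)+g(\zeta)]\ge0\}\le\exp(g(\zeta)-\gamma\zeta)$. (II) If $\mathcal{V}(s,t)$ is a deterministic function of $s\in\mathscr{S}$ and $t\in\mathbb{R}^+$, then $\Pr\{\sup_{t>0}[s(X_t-\gamma)-\mathcal{V}(s,t)+\mathcal{V}(s,\tau)]\ge0\}\le\exp(\mathcal{V}(s,\tau)-\gamma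 s)$ for all $s\in\mathscr{S}$ and $\tau\in\mathbb{R}^+$. (III) If $\mathcal{V}(s,t)=\varphi(s)V_t+\ln C$, where $C>0$ is a constant, $\varphi$ is a deterministic function on $\mathscr{S}$, and $\{V_t,\ t\in\mathbb{R}^+\}$ is a deterministic or stochastic process, then $\Pr\{\sup_{t>0}[s(X_t-\gamma)-\varphi(s)(V_t-m)]\ge0\}\le C\exp(m\varphi(s)-\gamma s)$ for all $s\in\mathscr{S}$ and $m\in\mathbb{R}$.
   Context: $\mathbb{R}^+$ denotes the set of nonnegative real numbers. *)

theory Defs
  imports "HOL-Probability.Probability"
begin

definition natural_filtration ::
  "'a measure \<Rightarrow> (real \<Rightarrow> ('a \<Rightarrow> real) set) \<Rightarrow> real \<Rightarrow> 'a measure" where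
  "natural_filtration M Y t =
     sigma (space M) {f -` B \<inter> space M | f B u. 0 \<le> u \<and> u \<le> t \<and> f \<in> Y u \<and> B \<in> sets borel}"

definition supermartingale ::
  "'a measure \<Rightarrow> (real \<Rightarrow> 'a measure) \<Rightarrow> (real \<Rightarrow> 'a \<Rightarrow> real) \<Rightarrow> bool" where
  "supermartingale M F Z \<longleftrightarrow>
     (\<forall>t\<ge>0. subalgebra M (F t)) \<and>
     (\<forall>u t. 0 \<le> u \<longrightarrow> u \<le> t \<longrightarrow> sets (F u) \<subseteq> sets (F t)) \<and>
     (\<forall>t\<ge>0. Z t \<in> borel_measurable (F t) \<and> integrable M (Z t)) \<and>
     (\<forall>u t. 0 \<le> u \<longrightarrow> u \<le> t \<longrightarrow>
        (AE \<omega> in M. real_cond_exp M (F u) (Z t) \<omega> \<le> Z u \<omega>))"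

text \<open>Outer probability bound: the (possibly non-measurable) event E is contained in a
measurable event of probability at most b.\<close>
definition outer_prob_le :: "'a measure \<Rightarrow> 'a set \<Rightarrow> real \<Rightarrow> bool" where
  "outer_prob_le M E b \<longleftrightarrow> (\<exists>A\<in>sets M. E \<subseteq> A \<and> measure M A \<le> b)"

end

theory Submission
  imports Defs
begin

text \<open>
  Since \<open>exp (s X\<^sub>t - V(s,t)) \<le> Z(s,t)\<close> almost surely, and
  \<open>exp (s X\<^sub>t - V(s,t)) = a exp (s (X\<^sub>t - \<gamma>) - V(s,t) + h)\<close> with \<open>a = exp (s \<gamma> - h)\<close>,
  the crossing event \<open>sup\<^sub>t [s (X\<^sub>t - \<gamma>) - V(s,t) + h] \<ge> 0\<close> lies, up to a null set,
  in \<open>{sup\<^sub>t Z(s,t) \<ge> a}\<close>. Ville's maximal inequality for the nonnegative supermartingale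
  \<open>Z(s,\<cdot>)\<close> bounds the probability of that event by \<open>E[Z(s,0)] / a \<le> exp (h - \<gamma> s)\<close>.
  Ville's inequality is proved for finitely many times by induction on the earliest time,
  passes to countably many times by continuity of the measure, and to all \<open>t > 0\<close> by
  right continuity, which lets the supremum range over the positive rationals.
  The three special cases take \<open>h = g(s)\<close>, \<open>h = V(s,\<tau>)\<close> and \<open>h = ln C + m \<phi>(s)\<close>.
\<close>

lemma integrable_imp_set_integrable:
  fixes f :: "'a \<Rightarrow> real"
  shows "A \<in> sets M \<Longrightarrow> integrable M f \<Longrightarrow> set_integrable M A f"
  unfolding set_integrable_def by (rule integrable_mult_indicator)

lemma const_mult_measure_le_set_integral:
  fixes f :: "'a \<Rightarrow> real"
  assumes "finite_measure M" and "A \<in> sets M" and "integrable M f"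
    and "\<And>x. x \<in> A \<Longrightarrow> c \<le> f x"
  shows "c * measure M A \<le> (\<integral>x\<in>A. f x \<partial>M)"
proof -
  interpret finite_measure M by fact
  have "c * measure M A = (\<integral>x\<in>A. c \<partial>M)"
    using assms(2) set_integral_const[of A M c] by (simp add: mult.commute)
  also have "\<dots> \<le> (\<integral>x\<in>A. f x \<partial>M)"
    using assms by (intro set_integral_mono integrable_imp_set_integrable) auto
  finally show ?thesis .
qed

lemma set_integral_split_level:
  fixes f :: "'a \<Rightarrow> real"
  assumes "B \<in> sets M" and "integrable M f"
  shows "(\<integral>\<omega>\<in>B \<inter> {\<omega>\<in>space M. c < f \<omega>}. f \<omega> \<partial>M) + (\<integral>\<omega>\<in>B \<inter> {\<omega>\<in>space M. f \<omega> \<le> c}. f \<omega> \<partial>M)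
       = (\<integral>\<omega>\<in>B. f \<omega> \<partial>M)"
proof -
  have [measurable]: "f \<in> borel_measurable M"
    using assms(2) by simp
  let ?B1 = "B \<inter> {\<omega>\<in>space M. c < f \<omega>}" and ?B2 = "B \<inter> {\<omega>\<in>space M. f \<omega> \<le> c}"
  have "(\<integral>\<omega>\<in>?B1 \<union> ?B2. f \<omega> \<partial>M) = (\<integral>\<omega>\<in>?B1. f \<omega> \<partial>M) + (\<integral>\<omega>\<in>?B2. f \<omega> \<partial>M)"
    using assms by (intro set_integral_Un integrable_imp_set_integrable) auto
  moreover have "?B1 \<union> ?B2 = B"
    using sets.sets_into_space[OF assms(1)] by auto
  ultimately show ?thesis
    by simp
qed

lemma set_integral_nonneg_AE:
  fixes f :: "'a \<Rightarrow> real"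
  assumes "AE x in M. 0 \<le> f x"
  shows "0 \<le> (\<integral>x\<in>A. f x \<partial>M)"
proof -
  have "AE x in M. 0 \<le> indicator A x * f x"
    using assms by eventually_elim simp
  then show ?thesis
    unfolding set_lebesgue_integral_def by (intro integral_nonneg_AE) simp
qed

lemma SUP_greaterThan_eq_SUP_Rats:
  fixes f :: "real \<Rightarrow> 'b::{complete_linorder, linorder_topology}"
  assumes "\<And>t. a < t \<Longrightarrow> continuous (at_right t) f"
  shows "(SUP t\<in>{a<..}. f t) = (SUP q\<in>\<rat> \<inter> {a<..}. f q)"
proof (rule antisym)
  show "(SUP t\<in>{a<..}. f t) \<le> (SUP q\<in>\<rat> \<inter> {a<..}. f q)"
  proof (rule SUP_least)
    fix t assume "t \<in> {a<..}"
    show "f t \<le> (SUP q\<in>\<rat> \<inter> {a<..}. f q)"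
      unfolding le_SUP_iff
    proof (intro allI impI)
      fix y assume "y < f t"
      moreover have "(f \<longlongrightarrow> f t) (at_right t)"
        using assms \<open>t \<in> {a<..}\<close> by (simp add: continuous_within)
      ultimately have "eventually (\<lambda>u. y < f u) (at_right t)"
        by (simp add: order_tendstoD)
      then obtain b where "t < b" and b: "\<And>u. t < u \<Longrightarrow> u < b \<Longrightarrow> y < f u"
        unfolding eventually_at_right[OF less_add_one] by blast
      obtain q where "q \<in> \<rat>" "t < q" "q < b"
        using Rats_dense_in_real[OF \<open>t < b\<close>] by blast
      then show "\<exists>q\<in>\<rat> \<inter> {a<..}. y < f q"
        using b \<open>t \<in> {a<..}\<close> by force
    qed
  qed
  show "(SUP q\<in>\<rat> \<inter> {a<..}. f q) \<le> (SUP t\<in>{a<..}. f t)"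
    by (rule SUP_subset_mono) auto
qed

lemma crossing_imp_exp_le_SUP:
  fixes x v z :: "'b \<Rightarrow> real"
  assumes dom: "\<And>t. t \<in> T \<Longrightarrow> exp (s * x t - v t) \<le> z t"
    and crossing: "0 \<le> (SUP t\<in>T. ereal (s * (x t - \<gamma>) - v t + h))"
  shows "ereal (exp (s * \<gamma> - h)) \<le> (SUP t\<in>T. ereal (z t))"
  unfolding le_SUP_iff
proof (intro allI impI)
  fix y assume "y < ereal (exp (s * \<gamma> - h))"
  then have "max y 0 < ereal (exp (s * \<gamma> - h))"
    by simp
  then obtain w where "max y 0 < w" "w < ereal (exp (s * \<gamma> - h))"
    using dense by blast
  then obtain r where r: "y < ereal r" "0 < r" "r < exp (s * \<gamma> - h)"
    by (cases w) auto
  then have "ereal (ln r - (s * \<gamma> - h)) < 0"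
    using ln_less_cancel_iff[of r "exp (s * \<gamma> - h)"] by simp
  also note crossing
  finally obtain t where "t \<in> T" and "ln r - (s * \<gamma> - h) < s * (x t - \<gamma>) - v t + h"
    by (auto simp: less_SUP_iff)
  then have "ln r < s * x t - v t"
    by (simp add: algebra_simps)
  then have "r < exp (s * x t - v t)"
    using \<open>0 < r\<close> by (metis exp_less_mono exp_ln)
  also have "\<dots> \<le> z t"
    using dom \<open>t \<in> T\<close> by blast
  finally have "y < ereal (z t)"
    using r(1) by (simp add: order.strict_trans)
  then show "\<exists>t\<in>T. y < ereal (z t)"
    using \<open>t \<in> T\<close> by blast
qed

lemma supermartingale_sets_subset:
  "supermartingale M F Z \<Longrightarrow> 0 \<le> t \<Longrightarrow> sets (F t) \<subseteq> sets M"
  unfolding supermartingale_def subalgebra_def by blast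

lemma supermartingale_integrable:
  "supermartingale M F Z \<Longrightarrow> 0 \<le> t \<Longrightarrow> integrable M (Z t)"
  unfolding supermartingale_def by blast

lemma supermartingale_borel_measurable:
  assumes "supermartingale M F Z" and "0 \<le> t"
  shows "Z t \<in> borel_measurable M"
  using assms measurable_from_subalg[of M "F t" "Z t" borel]
  unfolding supermartingale_def by blast

lemma supermartingale_level_set_measurable:
  assumes "supermartingale M F Z" and "0 \<le> t" and "B \<in> sets (F t)" and "S \<in> sets borel"
  shows "B \<inter> {\<omega>\<in>space M. Z t \<omega> \<in> S} \<in> sets (F t)"
proof -
  have "space (F t) = space M" and [measurable]: "Z t \<in> borel_measurable (F t)"
    using assms(1,2) unfolding supermartingale_def subalgebra_def by auto
  moreover have "{\<omega>\<in>space (F t). Z t \<omega> \<in> S} \<in> sets (F t)"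
    using assms(4) by measurable
  ultimately show ?thesis
    using assms(3) by auto
qed

lemma supermartingale_set_integral_mono:
  assumes "prob_space M" and Z: "supermartingale M F Z"
    and "0 \<le> u" and "u \<le> t" and B: "B \<in> sets (F u)"
  shows "(\<integral>\<omega>\<in>B. Z t \<omega> \<partial>M) \<le> (\<integral>\<omega>\<in>B. Z u \<omega> \<partial>M)"
proof -
  interpret prob_space M by fact
  interpret finite_measure_subalgebra M "F u"
    using Z \<open>0 \<le> u\<close> by unfold_locales (simp add: supermartingale_def)
  have int: "integrable M (Z t)" "integrable M (Z u)"
    using Z \<open>0 \<le> u\<close> \<open>u \<le> t\<close> by (auto intro: supermartingale_integrable)
  have BM: "B \<in> sets M"
    using supermartingale_sets_subset[OF Z \<open>0 \<le> u\<close>] B by blast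
  have "(\<integral>\<omega>\<in>B. Z t \<omega> \<partial>M) = (\<integral>\<omega>\<in>B. real_cond_exp M (F u) (Z t) \<omega> \<partial>M)"
    using int(1) B by (rule real_cond_exp_intA)
  also have "\<dots> \<le> (\<integral>\<omega>\<in>B. Z u \<omega> \<partial>M)"
  proof (intro set_integral_mono_AE integrable_imp_set_integrable)
    have "AE \<omega> in M. real_cond_exp M (F u) (Z t) \<omega> \<le> Z u \<omega>"
      using Z \<open>0 \<le> u\<close> \<open>u \<le> t\<close> unfolding supermartingale_def by blast
    then show "AE \<omega> in M. \<omega> \<in> B \<longrightarrow> real_cond_exp M (F u) (Z t) \<omega> \<le> Z u \<omega>"
      by eventually_elim simp
  qed (use int BM real_cond_exp_int(1)[OF int(1)] in auto)
  finally show ?thesis .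
qed

lemma supermartingale_exceedance_set_measurable:
  assumes "supermartingale M F Z" and "countable T" and "T \<subseteq> {0..}"
  shows "{\<omega>\<in>space M. \<exists>t\<in>T. c < Z t \<omega>} \<in> sets M"
proof -
  have "{\<omega>\<in>space M. c < Z t \<omega>} \<in> sets M" if "t \<in> T" for t
  proof -
    have [measurable]: "Z t \<in> borel_measurable M"
      using supermartingale_borel_measurable[OF assms(1)] that assms(3) by auto
    show ?thesis by measurable
  qed
  then have "(\<Union>t\<in>T. {\<omega>\<in>space M. c < Z t \<omega>}) \<in> sets M"
    using assms(2) by blast
  moreover have "{\<omega>\<in>space M. \<exists>t\<in>T. c < Z t \<omega>} = (\<Union>t\<in>T. {\<omega>\<in>space M. c < Z t \<omega>})"
    by blast
  ultimately show ?thesis by simp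
qed

lemma supermartingale_maximal_inequality_finite:
  assumes "prob_space M" and Z: "supermartingale M F Z"
    and nonneg: "\<And>t. 0 \<le> t \<Longrightarrow> AE \<omega> in M. 0 \<le> Z t \<omega>"
    and "0 \<le> c" and "finite T" and "T \<subseteq> {u..}" and "0 \<le> u" and "B \<in> sets (F u)"
  shows "c * measure M (B \<inter> {\<omega>\<in>space M. \<exists>t\<in>T. c < Z t \<omega>}) \<le> (\<integral>\<omega>\<in>B. Z u \<omega> \<partial>M)"
  using \<open>finite T\<close> \<open>T \<subseteq> {u..}\<close> \<open>0 \<le> u\<close> \<open>B \<in> sets (F u)\<close>
proof (induction T arbitrary: u B rule: finite_linorder_min_induct)
  case empty
  then show ?case
    using set_integral_nonneg_AE[OF nonneg] by simp
next
  case (insert b A)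
  interpret prob_space M by fact
  let ?hit = "\<lambda>T. {\<omega>\<in>space M. \<exists>t\<in>T. c < Z t \<omega>}"
  have "u \<le> b" "0 \<le> b"
    using insert.prems by auto
  have B: "B \<in> sets (F b)"
    using Z insert.prems \<open>u \<le> b\<close> unfolding supermartingale_def by blast
  define B1 where "B1 = B \<inter> {\<omega>\<in>space M. c < Z b \<omega>}"
  define B2 where "B2 = B \<inter> {\<omega>\<in>space M. Z b \<omega> \<le> c}"
  have B12: "B1 \<in> sets (F b)" "B2 \<in> sets (F b)"
    using supermartingale_level_set_measurable[OF Z \<open>0 \<le> b\<close> B, of "{c<..}"]
      supermartingale_level_set_measurable[OF Z \<open>0 \<le> b\<close> B, of "{..c}"]
    by (simp_all add: B1_def B2_def)
  have B_M: "B \<in> events" and B12_M: "B1 \<in> events" "B2 \<in> events"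
    using B B12 supermartingale_sets_subset[OF Z \<open>0 \<le> b\<close>] by auto
  have hitA: "?hit A \<in> events"
    using insert.hyps(1) insert.prems(1,2) Z
    by (intro supermartingale_exceedance_set_measurable) (auto intro: countable_finite)
  have int_b: "integrable M (Z b)"
    using Z \<open>0 \<le> b\<close> by (rule supermartingale_integrable)
  have "B \<inter> ?hit (insert b A) \<subseteq> B1 \<union> (B2 \<inter> ?hit A)"
    by (auto simp: B1_def B2_def)
  then have "measure M (B \<inter> ?hit (insert b A)) \<le> measure M B1 + measure M (B2 \<inter> ?hit A)"
    using B12_M hitA by (intro order_trans[OF finite_measure_mono measure_Un_le]) auto
  then have "c * measure M (B \<inter> ?hit (insert b A)) \<le> c * measure M B1 + c * measure M (B2 \<inter> ?hit A)"
    using \<open>0 \<le> c\<close> by (simp add: distrib_left[symmetric] mult_left_mono)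
  also have "\<dots> \<le> (\<integral>\<omega>\<in>B1. Z b \<omega> \<partial>M) + (\<integral>\<omega>\<in>B2. Z b \<omega> \<partial>M)"
  proof (rule add_mono)
    show "c * measure M B1 \<le> (\<integral>\<omega>\<in>B1. Z b \<omega> \<partial>M)"
      using B12_M int_b
      by (intro const_mult_measure_le_set_integral) (auto simp: B1_def finite_measure_axioms)
    show "c * measure M (B2 \<inter> ?hit A) \<le> (\<integral>\<omega>\<in>B2. Z b \<omega> \<partial>M)"
      using insert.hyps(2) \<open>0 \<le> b\<close> B12(2) by (intro insert.IH) auto
  qed
  also have "\<dots> = (\<integral>\<omega>\<in>B. Z b \<omega> \<partial>M)"
    unfolding B1_def B2_def using B_M int_b by (rule set_integral_split_level)
  also have "\<dots> \<le> (\<integral>\<omega>\<in>B. Z u \<omega> \<partial>M)"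
    using insert.prems \<open>u \<le> b\<close> by (intro supermartingale_set_integral_mono[OF prob_space_axioms Z]) auto
  finally show ?case .
qed

lemma supermartingale_maximal_inequality_countable:
  assumes "prob_space M" and Z: "supermartingale M F Z"
    and nonneg: "\<And>t. 0 \<le> t \<Longrightarrow> AE \<omega> in M. 0 \<le> Z t \<omega>"
    and "0 \<le> c" and "countable D" and "D \<subseteq> {0..}"
  shows "c * measure M {\<omega>\<in>space M. \<exists>t\<in>D. c < Z t \<omega>} \<le> (\<integral>\<omega>. Z 0 \<omega> \<partial>M)"
proof -
  interpret prob_space M by fact
  let ?hit = "\<lambda>T. {\<omega>\<in>space M. \<exists>t\<in>T. c < Z t \<omega>}"
  have space_F0: "space M \<in> sets (F 0)"
    using Z unfolding supermartingale_def subalgebra_def by (metis order_refl sets.top)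
  have finite_bound: "c * measure M (?hit T) \<le> (\<integral>\<omega>. Z 0 \<omega> \<partial>M)" if "finite T" "T \<subseteq> D" for T
  proof -
    have "c * measure M (space M \<inter> ?hit T) \<le> (\<integral>\<omega>\<in>space M. Z 0 \<omega> \<partial>M)"
      using that assms(4,6) space_F0
      by (intro supermartingale_maximal_inequality_finite[OF prob_space_axioms Z nonneg]) auto
    then show ?thesis
      using set_integral_space[OF supermartingale_integrable[OF Z order_refl]]
      by (simp add: Int_absorb1)
  qed
  show ?thesis
  proof (cases "D = {}")
    case True
    then show ?thesis using finite_bound[of "{}"] by simp
  next
    case False
    define d where "d = from_nat_into D"
    have range_d: "range d = D"
      unfolding d_def using False \<open>countable D\<close> by (rule range_from_nat_into)
    have hit_events: "?hit (d ` {..n}) \<in> events" for n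
      using Z range_d \<open>D \<subseteq> {0..}\<close>
      by (intro supermartingale_exceedance_set_measurable) auto
    have "(\<Union>n. ?hit (d ` {..n})) = ?hit D"
      using range_d by (auto 0 4 intro: rangeI)
    moreover have "(\<lambda>n. measure M (?hit (d ` {..n}))) \<longlonglongrightarrow> measure M (\<Union>n. ?hit (d ` {..n}))"
    proof (rule finite_Lim_measure_incseq)
      show "incseq (\<lambda>n. ?hit (d ` {..n}))"
        unfolding incseq_def by (auto 0 4)
    qed (use hit_events in auto)
    ultimately have "(\<lambda>n. c * measure M (?hit (d ` {..n}))) \<longlonglongrightarrow> c * measure M (?hit D)"
      by (intro tendsto_mult_left) simp
    then show ?thesis
    proof (rule LIMSEQ_le_const2)
      have "c * measure M (?hit (d ` {..n})) \<le> (\<integral>\<omega>. Z 0 \<omega> \<partial>M)" for n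
        using range_d by (intro finite_bound) auto
      then show "\<exists>N. \<forall>n\<ge>N. c * measure M (?hit (d ` {..n})) \<le> (\<integral>\<omega>. Z 0 \<omega> \<partial>M)"
        by blast
    qed
  qed
qed

lemma supermartingale_maximal_inequality_SUP_countable:
  assumes "prob_space M" and Z: "supermartingale M F Z"
    and nonneg: "\<And>t. 0 \<le> t \<Longrightarrow> AE \<omega> in M. 0 \<le> Z t \<omega>"
    and "0 < a" and "countable D" and "D \<subseteq> {0..}"
  shows "{\<omega>\<in>space M. ereal a \<le> (SUP t\<in>D. ereal (Z t \<omega>))} \<in> sets M"
    and "a * measure M {\<omega>\<in>space M. ereal a \<le> (SUP t\<in>D. ereal (Z t \<omega>))} \<le> (\<integral>\<omega>. Z 0 \<omega> \<partial>M)"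
proof -
  let ?G = "{\<omega>\<in>space M. ereal a \<le> (SUP t\<in>D. ereal (Z t \<omega>))}"
  interpret prob_space M by fact
  have [measurable]: "(\<lambda>\<omega>. SUP t\<in>D. ereal (Z t \<omega>)) \<in> borel_measurable M"
    using assms(5,6) supermartingale_borel_measurable[OF Z]
    by (intro borel_measurable_SUP) auto
  show G: "?G \<in> events"
    by measurable
  have bound_below: "c * prob ?G \<le> (\<integral>\<omega>. Z 0 \<omega> \<partial>M)" if "0 < c" "c < a" for c
  proof -
    have "?G \<subseteq> {\<omega>\<in>space M. \<exists>t\<in>D. c < Z t \<omega>}"
    proof
      fix \<omega> assume "\<omega> \<in> ?G"
      have "ereal c < ereal a"
        using \<open>c < a\<close> by simp
      also have "\<dots> \<le> (SUP t\<in>D. ereal (Z t \<omega>))"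
        using \<open>\<omega> \<in> ?G\<close> by simp
      finally have "ereal c < (SUP t\<in>D. ereal (Z t \<omega>))" .
      then show "\<omega> \<in> {\<omega>\<in>space M. \<exists>t\<in>D. c < Z t \<omega>}"
        using \<open>\<omega> \<in> ?G\<close> by (auto simp: less_SUP_iff)
    qed
    then have "c * prob ?G \<le> c * prob {\<omega>\<in>space M. \<exists>t\<in>D. c < Z t \<omega>}"
      using G Z assms(5,6) \<open>0 < c\<close>
      by (intro mult_left_mono finite_measure_mono supermartingale_exceedance_set_measurable) auto
    also have "\<dots> \<le> (\<integral>\<omega>. Z 0 \<omega> \<partial>M)"
      using assms \<open>0 < c\<close> by (intro supermartingale_maximal_inequality_countable) auto
    finally show ?thesis .
  qed
  have "((\<lambda>c. c * prob ?G) \<longlongrightarrow> a * prob ?G) (at_left a)"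
    by (intro tendsto_intros)
  moreover have "eventually (\<lambda>c. c * prob ?G \<le> (\<integral>\<omega>. Z 0 \<omega> \<partial>M)) (at_left a)"
    unfolding eventually_at_left[OF \<open>0 < a\<close>] using bound_below \<open>0 < a\<close> by blast
  ultimately show "a * prob ?G \<le> (\<integral>\<omega>. Z 0 \<omega> \<partial>M)"
    by (rule tendsto_upperbound) simp
qed

theorem supermartingale_maximal_inequality:
  assumes "prob_space M" and Z: "supermartingale M F Z"
    and right_cont: "\<And>\<omega> t. \<omega> \<in> space M \<Longrightarrow> 0 < t \<Longrightarrow> continuous (at_right t) (\<lambda>u. Z u \<omega>)"
    and nonneg: "\<And>t. 0 \<le> t \<Longrightarrow> AE \<omega> in M. 0 \<le> Z t \<omega>"
    and "0 < a"
  shows "{\<omega>\<in>space M. ereal a \<le> (SUP t\<in>{0<..}. ereal (Z t \<omega>))} \<in> sets M"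
    and "a * measure M {\<omega>\<in>space M. ereal a \<le> (SUP t\<in>{0<..}. ereal (Z t \<omega>))}
           \<le> (\<integral>\<omega>. Z 0 \<omega> \<partial>M)"
proof -
  let ?G = "{\<omega>\<in>space M. ereal a \<le> (SUP t\<in>{0<..}. ereal (Z t \<omega>))}"
  have "?G = {\<omega>\<in>space M. ereal a \<le> (SUP q\<in>\<rat> \<inter> {0<..}. ereal (Z q \<omega>))}"
    using right_cont
    by (auto simp: SUP_greaterThan_eq_SUP_Rats continuous_def intro: tendsto_ereal)
  moreover have "countable (\<rat> \<inter> {0::real<..})" and "\<rat> \<inter> {0<..} \<subseteq> {0::real..}"
    using countable_rat by auto
  ultimately show "?G \<in> sets M" and "a * measure M ?G \<le> (\<integral>\<omega>. Z 0 \<omega> \<partial>M)"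
    using supermartingale_maximal_inequality_SUP_countable[OF assms(1,2) nonneg \<open>0 < a\<close>,
        of "\<rat> \<inter> {0<..}"]
    by simp_all
qed

lemma crossing_outer_prob_le_exp:
  fixes X V Z :: "real \<Rightarrow> 'a \<Rightarrow> real"
  assumes "prob_space M" and Z: "supermartingale M F Z"
    and right_cont: "\<And>\<omega> t. \<omega> \<in> space M \<Longrightarrow> 0 < t \<Longrightarrow> continuous (at_right t) (\<lambda>u. Z u \<omega>)"
    and Z0: "(\<integral>\<omega>. Z 0 \<omega> \<partial>M) \<le> 1"
    and dom: "AE \<omega> in M. \<forall>t\<ge>0. exp (s * X t \<omega> - V t \<omega>) \<le> Z t \<omega>"
  shows "outer_prob_le M
           {\<omega>\<in>space M. (SUP t\<in>{0<..}. ereal (s * (X t \<omega> - \<gamma>) - V t \<omega> + h)) \<ge> 0}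
           (exp (h - \<gamma> * s))"
proof -
  interpret prob_space M by fact
  define a where "a = exp (s * \<gamma> - h)"
  have "0 < a"
    unfolding a_def by simp
  have nonneg: "AE \<omega> in M. 0 \<le> Z t \<omega>" if "0 \<le> t" for t
    using dom by eventually_elim (use that in \<open>blast intro: order_trans[OF exp_ge_zero]\<close>)
  let ?G = "{\<omega>\<in>space M. ereal a \<le> (SUP t\<in>{0<..}. ereal (Z t \<omega>))}"
  note ville = supermartingale_maximal_inequality[OF prob_space_axioms Z right_cont nonneg \<open>0 < a\<close>]
  obtain N where dom_N: "\<And>\<omega>. \<omega> \<in> space M - N \<Longrightarrow> \<forall>t\<ge>0. exp (s * X t \<omega> - V t \<omega>) \<le> Z t \<omega>"
    and N: "N \<in> null_sets M"
    using AE_E3[OF dom] by metis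
  have "{\<omega>\<in>space M. (SUP t\<in>{0<..}. ereal (s * (X t \<omega> - \<gamma>) - V t \<omega> + h)) \<ge> 0} \<subseteq> N \<union> ?G"
    using dom_N unfolding a_def by (auto intro!: crossing_imp_exp_le_SUP)
  moreover have "measure M (N \<union> ?G) \<le> exp (h - \<gamma> * s)"
  proof -
    have "measure M (N \<union> ?G) \<le> measure M N + measure M ?G"
      using N ville(1) by (intro measure_Un_le) auto
    also have "\<dots> = measure M ?G"
      using N by (simp add: measure_eq_0_null_sets)
    also have "\<dots> \<le> 1 / a"
      using ville(2) Z0 \<open>0 < a\<close> by (simp add: pos_le_divide_eq mult.commute)
    also have "\<dots> = exp (h - \<gamma> * s)"
      unfolding a_def by (simp add: exp_minus[symmetric] divide_inverse mult.commute)
    finally show ?thesis .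
  qed
  ultimately show ?thesis
    unfolding outer_prob_le_def using N ville(1) by blast
qed

lemma crossing_outer_prob_le_exp_linear:
  fixes X V W :: "real \<Rightarrow> 'a \<Rightarrow> real"
  assumes bound: "\<And>h. outer_prob_le M
      {\<omega>\<in>space M. (SUP t\<in>{0<..}. ereal (s * (X t \<omega> - \<gamma>) - V t \<omega> + h)) \<ge> 0}
      (exp (h - \<gamma> * s))"
    and "C > 0" and V_eq: "\<forall>t\<ge>0. \<forall>\<omega>\<in>space M. V t \<omega> = \<phi> * W t \<omega> + ln C"
  shows "outer_prob_le M
      {\<omega>\<in>space M. (SUP t\<in>{0<..}. ereal (s * (X t \<omega> - \<gamma>) - \<phi> * (W t \<omega> - m))) \<ge> 0}
      (C * exp (m * \<phi> - \<gamma> * s))"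
proof -
  have "(SUP t\<in>{0<..}. ereal (s * (X t \<omega> - \<gamma>) - \<phi> * (W t \<omega> - m)))
      = (SUP t\<in>{0<..}. ereal (s * (X t \<omega> - \<gamma>) - V t \<omega> + (ln C + m * \<phi>)))"
    if "\<omega> \<in> space M" for \<omega>
    using V_eq that by (intro SUP_cong) (auto simp: algebra_simps)
  then have "{\<omega>\<in>space M. (SUP t\<in>{0<..}. ereal (s * (X t \<omega> - \<gamma>) - \<phi> * (W t \<omega> - m))) \<ge> 0}
      = {\<omega>\<in>space M. (SUP t\<in>{0<..}. ereal (s * (X t \<omega> - \<gamma>) - V t \<omega> + (ln C + m * \<phi>))) \<ge> 0}"
    by auto
  moreover have "exp (ln C + m * \<phi> - \<gamma> * s) = C * exp (m * \<phi> - \<gamma> * s)"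
    using \<open>C > 0\<close> by (metis exp_add exp_ln add_diff_eq)
  ultimately show ?thesis
    using bound[of "ln C + m * \<phi>"] by simp
qed

theorem theorem10:
  fixes M :: "'a measure"
    and S :: "real set"
    and V :: "real \<Rightarrow> real \<Rightarrow> 'a \<Rightarrow> real"
    and X :: "real \<Rightarrow> 'a \<Rightarrow> real"
    and Z :: "real \<Rightarrow> real \<Rightarrow> 'a \<Rightarrow> real"
    and \<gamma> :: real
    and g :: "real \<Rightarrow> real"
  assumes "prob_space M"
    and V_rv: "\<forall>s\<in>S. \<forall>t\<ge>0. V s t \<in> borel_measurable M"
    and X_rv: "\<forall>t\<ge>0. X t \<in> borel_measurable M"
    and X0: "AE \<omega> in M. X 0 \<omega> = 0"
    and Z_super: "\<forall>s\<in>S. supermartingale M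
                     (natural_filtration M (\<lambda>u. {V s u, X u})) (Z s)"
    and Z_rcont: "\<forall>s\<in>S. \<forall>\<omega>\<in>space M. \<forall>t\<ge>0.
                     continuous (at_right t) (\<lambda>u. Z s u \<omega>)"
    and Z0: "\<forall>s\<in>S. (\<integral>\<omega>. Z s 0 \<omega> \<partial>M) \<le> 1"
    and Z_dom: "\<forall>s\<in>S. AE \<omega> in M. \<forall>t\<ge>0. exp (s * X t \<omega> - V s t \<omega>) \<le> Z s t \<omega>"
  shows
    "(\<forall>s\<in>S. outer_prob_le M
        {\<omega>\<in>space M. (SUP t\<in>{0<..}. ereal (s * (X t \<omega> - \<gamma>) - V s t \<omega> + g s)) \<ge> 0}
        (exp (g s - \<gamma> * s)))
     \<and>
     (\<forall>\<zeta>. \<zeta> \<in> S \<longrightarrow> (\<forall>s\<in>S. g \<zeta> - \<gamma> * \<zeta> \<le> g s - \<gamma> * s) \<longrightarrow>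
        outer_prob_le M
          {\<omega>\<in>space M. (SUP t\<in>{0<..}. ereal (\<zeta> * (X t \<omega> - \<gamma>) - V \<zeta> t \<omega> + g \<zeta>)) \<ge> 0}
          (exp (g \<zeta> - \<gamma> * \<zeta>)))
     \<and>
     ((\<exists>v :: real \<Rightarrow> real \<Rightarrow> real. \<forall>s\<in>S. \<forall>t\<ge>0. \<forall>\<omega>\<in>space M. V s t \<omega> = v s t) \<longrightarrow>
        (\<forall>s\<in>S. \<forall>\<tau>\<ge>0. \<forall>\<omega>0\<in>space M. outer_prob_le M
          {\<omega>\<in>space M. (SUP t\<in>{0<..}.
              ereal (s * (X t \<omega> - \<gamma>) - V s t \<omega> + V s \<tau> \<omega>0)) \<ge> 0}
          (exp (V s \<tau> \<omega>0 - \<gamma> * s))))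
     \<and>
     (\<forall>(\<phi> :: real \<Rightarrow> real) (W :: real \<Rightarrow> 'a \<Rightarrow> real) (C :: real).
        C > 0 \<longrightarrow>
        (\<forall>s\<in>S. \<forall>t\<ge>0. \<forall>\<omega>\<in>space M. V s t \<omega> = \<phi> s * W t \<omega> + ln C) \<longrightarrow>
        (\<forall>s\<in>S. \<forall>m::real. outer_prob_le M
          {\<omega>\<in>space M. (SUP t\<in>{0<..}.
              ereal (s * (X t \<omega> - \<gamma>) - \<phi> s * (W t \<omega> - m))) \<ge> 0}
          (C * exp (m * \<phi> s - \<gamma> * s))))"
proof -
  have main: "outer_prob_le M
      {\<omega>\<in>space M. (SUP t\<in>{0<..}. ereal (s * (X t \<omega> - \<gamma>) - V s t \<omega> + h)) \<ge> 0}
      (exp (h - \<gamma> * s))" if "s \<in> S" for s h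
    using that Z_super Z_rcont Z0 Z_dom
    by (intro crossing_outer_prob_le_exp[OF assms(1), of _ "Z s"]) auto
  have linear: "outer_prob_le M
      {\<omega>\<in>space M. (SUP t\<in>{0<..}. ereal (s * (X t \<omega> - \<gamma>) - \<phi> s * (W t \<omega> - m))) \<ge> 0}
      (C * exp (m * \<phi> s - \<gamma> * s))"
    if "C > 0" and "\<forall>s\<in>S. \<forall>t\<ge>0. \<forall>\<omega>\<in>space M. V s t \<omega> = \<phi> s * W t \<omega> + ln C"
      and "s \<in> S" for \<phi> W C s m
    using that by (intro crossing_outer_prob_le_exp_linear[where V = "V s"] main) auto
  show ?thesis
    using main linear by blast
qed

end
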